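(* Let $n\ge 2$, $N=\{1,\dots,n\}$, for each $i\in N$ let $A_i$ be a nonempty finite set, $A=\prod_{i\in N}A_i$, $u_i:A\to\mathbb{R}$, $u(a)=(u_i(a))_{i\in N}$, $V=\operatorname{co}\{u(a):a\in A\}$ and $F^*=\prod_{i\in N}\left[\min_{a\in A}u_i(a),\ \max_{a\in A}u_i(a)\right]$. Then $V\neq F^*$ if and only if there exist two points $u,\tilde u\in V$ with $u\neq\tilde u$ satisfying: (1) there exists $\lambda\in\mathbb{R}^n\setminus\{\mathbf 0\}$ such that for all $\bar u\in\mathbb{R}^n$: $\bar u\in\arg\max_{u'\in V}\lambda\cdot u'$ if and only if $\bar u\in\{tu+(1-t)\tilde u: t\in[0,1]\}$; (2) there exist at least two players $i\in N$ such that $u_i\neq\tilde u_i$.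
   Context: $\operatorname{co}$ denotes convex hull. *)

theory Defs
  imports "HOL-Analysis.Analysis"
begin

text \<open>Players are the elements of a finite type 'n (so N has CARD('n) elements);
  player i has action set A i; action profiles are the elements of
  PiE UNIV A; payoff of player i at profile a is u i a.\<close>

definition profiles :: "('n \<Rightarrow> 'b set) \<Rightarrow> ('n \<Rightarrow> 'b) set" where
  "profiles A = PiE UNIV A"

definition payoff_vec :: "('n::finite \<Rightarrow> ('n \<Rightarrow> 'b) \<Rightarrow> real) \<Rightarrow> ('n \<Rightarrow> 'b) \<Rightarrow> real ^ 'n" where
  "payoff_vec u a = (\<chi> i. u i a)"

definition feasible_set :: "('n::finite \<Rightarrow> 'b set) \<Rightarrow> ('n \<Rightarrow> ('n \<Rightarrow> 'b) \<Rightarrow> real) \<Rightarrow> (real ^ 'n) set" where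
  "feasible_set A u = convex hull (payoff_vec u ` profiles A)"

definition Fstar :: "('n::finite \<Rightarrow> 'b set) \<Rightarrow> ('n \<Rightarrow> ('n \<Rightarrow> 'b) \<Rightarrow> real) \<Rightarrow> (real ^ 'n) set" where
  "Fstar A u = {x. \<forall>i. Min (u i ` profiles A) \<le> x $ i \<and> x $ i \<le> Max (u i ` profiles A)}"

end

theory Submission
  imports Defs
begin

text \<open>The feasible set V is a polytope inside the box F*, and each facet of the box meets V.
  If V = F*, exchanging one coordinate between two maximisers of a linear functional on the box
  yields another maximiser; hence an exposed edge of the box changes only one coordinate.
  Conversely, suppose every edge of V changes only one coordinate. Given a sign vector s, take a
  vertex p of V maximising s \<bullet> x. If some coordinate s_i x_i could be increased inside V, then,
  as in the simplex method, some edge of V leaving p increases it, and since that edge is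
  axis-parallel it also increases s \<bullet> x. So p is the corner of F* selected by s, all corners of F*
  lie in V, and V = F*. Finally, in dimension at least two every edge of V is the set of
  maximisers of a nonzero linear functional, which is condition (1).\<close>

section \<open>Maximisers of linear functionals on polytopes\<close>

definition maximizers :: "'a::real_inner set \<Rightarrow> 'a \<Rightarrow> 'a set" where
  "maximizers S l = {z \<in> S. \<forall>y \<in> S. l \<bullet> y \<le> l \<bullet> z}"

lemma polyhedron_face_eq_maximizers:
  fixes V :: "'a::euclidean_space set"
  assumes "polyhedron V" "F face_of V" "F \<noteq> {}" "aff_dim F < DIM('a)"
  obtains l where "l \<noteq> 0" "maximizers V l = F"
proof -
  have "F exposed_face_of V"
    using assms(1,2) exposed_face_of_polyhedron by blast
  then obtain a b where ab: "V \<subseteq> {x. a \<bullet> x \<le> b}" "F = V \<inter> {x. a \<bullet> x = b}"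
    unfolding exposed_face_of_def by blast
  obtain p where "p \<in> F"
    using assms(3) by blast
  then have p: "p \<in> V" "a \<bullet> p = b"
    using ab(2) by auto
  show thesis
  proof (cases "a = 0")
    case False
    have "maximizers V a = F"
      using ab p unfolding maximizers_def by fastforce
    then show thesis
      using that False by blast
  next
    case True
    then have "F = V"
      using ab p by auto
    obtain l c where "l \<noteq> 0" "F \<subseteq> {x. l \<bullet> x = c}"
      using aff_lowdim_subset_hyperplane[OF assms(4)] by blast
    then have "l \<bullet> x = c" if "x \<in> V" for x
      using \<open>F = V\<close> that by blast
    then have "maximizers V l = F"
      using \<open>F = V\<close> unfolding maximizers_def by auto
    then show thesis
      using that \<open>l \<noteq> 0\<close> by blast
  qed
qed

lemma polytope_extreme_point_maximizer:
  fixes V :: "'a::euclidean_space set"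
  assumes "polytope V" "V \<noteq> {}"
  obtains p where "p extreme_point_of V" "p \<in> maximizers V s"
proof -
  have "continuous_on V (\<lambda>x. s \<bullet> x)"
    by (intro continuous_intros)
  then obtain z where z: "z \<in> V" "\<And>y. y \<in> V \<Longrightarrow> s \<bullet> y \<le> s \<bullet> z"
    using continuous_attains_sup[OF polytope_imp_compact[OF assms(1)] assms(2)] by blast
  define M where "M = V \<inter> {x. s \<bullet> x = s \<bullet> z}"
  have "M face_of V"
    unfolding M_def using z assms(1) polytope_imp_convex face_of_Int_supporting_hyperplane_le by blast
  moreover have "M \<noteq> {}"
    using z unfolding M_def by blast
  moreover have "polytope M"
    using \<open>M face_of V\<close> assms(1) face_of_polytope_polytope by blast
  ultimately obtain p where "p extreme_point_of M"
    using extreme_point_exists_convex polytope_imp_compact polytope_imp_convex by blast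
  then have "p extreme_point_of V" "p \<in> M"
    using \<open>M face_of V\<close> extreme_point_of_face by blast+
  moreover have "p \<in> maximizers V s"
    using \<open>p \<in> M\<close> z unfolding M_def maximizers_def by auto
  ultimately show thesis
    using that by blast
qed

lemma ratio_test_tilt:
  fixes S :: "'a::real_inner set"
  assumes "finite S"
    and below: "\<And>x. x \<in> S \<Longrightarrow> a \<bullet> x \<le> a \<bullet> p"
    and strict: "\<And>x. x \<in> S \<Longrightarrow> m \<bullet> x > m \<bullet> p \<Longrightarrow> a \<bullet> x < a \<bullet> p"
    and "x1 \<in> S" "m \<bullet> x1 > m \<bullet> p"
  obtains t x0 where "t > 0" "x0 \<in> S" "m \<bullet> x0 > m \<bullet> p"
    "(a + t *\<^sub>R m) \<bullet> x0 = (a + t *\<^sub>R m) \<bullet> p"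
    "\<And>x. x \<in> S \<Longrightarrow> (a + t *\<^sub>R m) \<bullet> x \<le> (a + t *\<^sub>R m) \<bullet> p"
proof -
  define T where "T = {x \<in> S. m \<bullet> x > m \<bullet> p}"
  define ratio where "ratio x = (a \<bullet> p - a \<bullet> x) / (m \<bullet> x - m \<bullet> p)" for x
  define t where "t = Min (ratio ` T)"
  have "finite T" "T \<noteq> {}"
    using \<open>finite S\<close> \<open>x1 \<in> S\<close> \<open>m \<bullet> x1 > m \<bullet> p\<close> unfolding T_def by auto
  then have "t \<in> ratio ` T"
    unfolding t_def by (intro Min_in) auto
  then obtain x0 where x0: "x0 \<in> T" "ratio x0 = t"
    by auto
  have t_le: "t \<le> ratio x" if "x \<in> T" for x
    using \<open>finite T\<close> that unfolding t_def by simp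
  have key: "(a + t *\<^sub>R m) \<bullet> x - (a + t *\<^sub>R m) \<bullet> p = t * (m \<bullet> x - m \<bullet> p) - (a \<bullet> p - a \<bullet> x)" for x
    by (simp add: algebra_simps)
  have "t > 0"
    using x0 strict unfolding T_def ratio_def by auto
  show thesis
  proof
    show "t > 0" by fact
    show "x0 \<in> S" "m \<bullet> x0 > m \<bullet> p"
      using x0(1) unfolding T_def by auto
    then have "t * (m \<bullet> x0 - m \<bullet> p) = a \<bullet> p - a \<bullet> x0"
      using x0(2) unfolding ratio_def by (simp add: field_simps)
    then show "(a + t *\<^sub>R m) \<bullet> x0 = (a + t *\<^sub>R m) \<bullet> p"
      using key[of x0] by simp
  next
    fix x assume "x \<in> S"
    show "(a + t *\<^sub>R m) \<bullet> x \<le> (a + t *\<^sub>R m) \<bullet> p"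
    proof (cases "x \<in> T")
      case True
      then have "t * (m \<bullet> x - m \<bullet> p) \<le> a \<bullet> p - a \<bullet> x"
        using t_le[OF True] unfolding T_def ratio_def by (simp add: pos_le_divide_eq)
      then show ?thesis using key[of x] by simp
    next
      case False
      then have "m \<bullet> x \<le> m \<bullet> p" using \<open>x \<in> S\<close> unfolding T_def by auto
      then have "t * (m \<bullet> x - m \<bullet> p) \<le> 0"
        using \<open>t > 0\<close> by (simp add: mult_nonneg_nonpos)
      then show ?thesis using key[of x] below[OF \<open>x \<in> S\<close>] by simp
    qed
  qed
qed

lemma extreme_point_in_nontrivial_proper_face:
  fixes K :: "'a::euclidean_space set"
  assumes K: "polyhedron K" and p: "p extreme_point_of K" and dim: "aff_dim K \<ge> 2"
  obtains F y where "F face_of K" "F \<noteq> K" "p \<in> F" "y \<in> F" "y \<noteq> p"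
proof -
  have "{p} face_of K"
    using p face_of_singleton by blast
  moreover have "{p} \<noteq> K"
    using dim by auto
  ultimately obtain G where G: "G facet_of K" "p \<in> G"
    using face_of_polyhedron_subset_facet[OF K] by blast
  then have "aff_dim G = aff_dim K - 1"
    by (simp add: facet_of_def)
  then have "G \<noteq> {p}" "G \<noteq> K"
    using dim by auto
  then obtain y where "y \<in> G" "y \<noteq> p"
    using G(2) by blast
  then show thesis
    using that[OF facet_of_imp_face_of[OF G(1)] \<open>G \<noteq> K\<close> G(2)] by blast
qed

lemma polytope_tilted_supporting_hyperplane:
  fixes K :: "'a::euclidean_space set"
  assumes K: "polytope K" and p: "p extreme_point_of K" and "q \<in> K" "m \<bullet> q > m \<bullet> p"
  obtains a t x0 where "t > 0" "x0 \<in> K" "m \<bullet> x0 > m \<bullet> p"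
    "\<And>x. x \<in> K \<Longrightarrow> x \<noteq> p \<Longrightarrow> a \<bullet> x < a \<bullet> p"
    "\<And>x. x \<in> K \<Longrightarrow> (a + t *\<^sub>R m) \<bullet> x \<le> (a + t *\<^sub>R m) \<bullet> p"
    "(a + t *\<^sub>R m) \<bullet> x0 = (a + t *\<^sub>R m) \<bullet> p"
proof -
  obtain S where S: "finite S" "K = convex hull S"
    using K unfolding polytope_def by blast
  have SK: "x \<in> K" if "x \<in> S" for x
    unfolding S(2) using that by (rule hull_inc)
  have "{p} exposed_face_of K"
    using p face_of_singleton exposed_face_of_polyhedron polytope_imp_polyhedron[OF K] by blast
  then obtain a b where ab: "K \<subseteq> {x. a \<bullet> x \<le> b}" "{p} = K \<inter> {x. a \<bullet> x = b}"
    unfolding exposed_face_of_def by blast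
  then have ap: "a \<bullet> p = b" by blast
  have a_strict: "a \<bullet> x < a \<bullet> p" if "x \<in> K" "x \<noteq> p" for x
    using ab ap that by force
  have "\<exists>x1 \<in> S. m \<bullet> x1 > m \<bullet> p"
  proof (rule ccontr)
    assume "\<not> ?thesis"
    then have "K \<subseteq> {x. m \<bullet> x \<le> m \<bullet> p}"
      unfolding S(2) by (intro hull_minimal) (auto simp: convex_halfspace_le not_less)
    then show False
      using \<open>q \<in> K\<close> \<open>m \<bullet> q > m \<bullet> p\<close> by auto
  qed
  then obtain x1 where x1: "x1 \<in> S" "m \<bullet> x1 > m \<bullet> p"
    by blast
  have below: "a \<bullet> x \<le> a \<bullet> p" if "x \<in> S" for x
    using SK[OF that] ab(1) ap by blast
  have strict: "a \<bullet> x < a \<bullet> p" if "x \<in> S" "m \<bullet> x > m \<bullet> p" for x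
    using a_strict[OF SK[OF that(1)]] that(2) by blast
  obtain t x0 where t: "t > 0" "x0 \<in> S" "m \<bullet> x0 > m \<bullet> p"
      "(a + t *\<^sub>R m) \<bullet> x0 = (a + t *\<^sub>R m) \<bullet> p"
      and k_le: "\<And>x. x \<in> S \<Longrightarrow> (a + t *\<^sub>R m) \<bullet> x \<le> (a + t *\<^sub>R m) \<bullet> p"
    using ratio_test_tilt[OF S(1) below strict x1] by blast
  have "K \<subseteq> {y. (a + t *\<^sub>R m) \<bullet> y \<le> (a + t *\<^sub>R m) \<bullet> p}"
    unfolding S(2) using k_le by (intro hull_minimal) (auto simp: convex_halfspace_le)
  then show thesis
    using that[OF t(1) SK[OF t(2)] t(3) a_strict _ t(4)] by blast
qed

lemma polytope_proper_face_improving: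
  fixes K :: "'a::euclidean_space set"
  assumes K: "polytope K" and p: "p extreme_point_of K" and "q \<in> K" "m \<bullet> q > m \<bullet> p"
    and dim: "aff_dim K \<ge> 2"
  obtains F q' where "F face_of K" "F \<noteq> K" "p \<in> F" "q' \<in> F" "m \<bullet> q' > m \<bullet> p"
proof -
  obtain a t x0 where t: "t > 0" "x0 \<in> K" "m \<bullet> x0 > m \<bullet> p"
    and a_strict: "\<And>x. x \<in> K \<Longrightarrow> x \<noteq> p \<Longrightarrow> a \<bullet> x < a \<bullet> p"
    and k_le: "\<And>x. x \<in> K \<Longrightarrow> (a + t *\<^sub>R m) \<bullet> x \<le> (a + t *\<^sub>R m) \<bullet> p"
    and k_x0: "(a + t *\<^sub>R m) \<bullet> x0 = (a + t *\<^sub>R m) \<bullet> p"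
    by (rule polytope_tilted_supporting_hyperplane[OF assms(1-4)], rule that)
  define k where "k = a + t *\<^sub>R m"
  have face: "K \<inter> {y. k \<bullet> y = k \<bullet> p} face_of K"
    unfolding k_def by (rule face_of_Int_supporting_hyperplane_le[OF polytope_imp_convex[OF K] k_le])
  show thesis
  proof (cases "K \<inter> {y. k \<bullet> y = k \<bullet> p} = K")
    case False
    moreover have "p \<in> K"
      using p extreme_point_of_def by auto
    ultimately show thesis
      using that face t k_x0 k_def by auto
  next
    case True
    \<comment> \<open>The tilted hyperplane contains all of K, so every other point of K improves on p.\<close>
    have improving: "m \<bullet> y > m \<bullet> p" if "y \<in> K" "y \<noteq> p" for y
    proof -
      have "t * (m \<bullet> y - m \<bullet> p) = a \<bullet> p - a \<bullet> y"
        using True that unfolding k_def by (auto simp: algebra_simps)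
      then show ?thesis
        using a_strict[OF that] t(1) by (smt (verit) mult_nonneg_nonpos)
    qed
    obtain F y where "F face_of K" "F \<noteq> K" "p \<in> F" "y \<in> F" "y \<noteq> p"
      by (rule extreme_point_in_nontrivial_proper_face[OF polytope_imp_polyhedron[OF K] p dim])
    then show thesis
      using that improving face_of_imp_subset by blast
  qed
qed

lemma collinear_polytope_improving_edge:
  fixes K :: "'a::euclidean_space set"
  assumes K: "polytope K" and "collinear K" "p extreme_point_of K" "q \<in> K" "m \<bullet> q > m \<bullet> p"
  obtains r where "closed_segment p r face_of K" "m \<bullet> r > m \<bullet> p"
proof -
  have "K \<noteq> {}"
    using \<open>q \<in> K\<close> by blast
  then obtain x y where "K = closed_segment x y"
    using compact_convex_collinear_segment polytope_imp_compact[OF K] polytope_imp_convex[OF K]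
      \<open>collinear K\<close> by blast
  moreover have "p = x \<or> p = y"
    using \<open>p extreme_point_of K\<close> calculation extreme_point_of_segment by blast
  ultimately obtain r where Kr: "K = closed_segment p r"
    using closed_segment_commute by blast
  obtain w where w: "0 \<le> w" "w \<le> 1" "q = (1 - w) *\<^sub>R p + w *\<^sub>R r"
    using \<open>q \<in> K\<close> Kr unfolding closed_segment_def by blast
  have "m \<bullet> q - m \<bullet> p = w * (m \<bullet> r - m \<bullet> p)"
    unfolding w(3) by (simp add: algebra_simps)
  then have "m \<bullet> r > m \<bullet> p"
    using \<open>m \<bullet> q > m \<bullet> p\<close> w by (smt (verit) mult_nonneg_nonpos)
  moreover have "closed_segment p r face_of K"
    using K Kr polytope_imp_convex face_of_refl by metis
  ultimately show thesis
    using that by blast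
qed

lemma polytope_improving_edge:
  fixes K :: "'a::euclidean_space set"
  assumes "polytope K" "p extreme_point_of K" "q \<in> K" "m \<bullet> q > m \<bullet> p"
  obtains r where "closed_segment p r face_of K" "m \<bullet> r > m \<bullet> p"
proof -
  have "\<exists>r. closed_segment p r face_of K \<and> m \<bullet> r > m \<bullet> p"
    using assms
  proof (induction "nat (aff_dim K)" arbitrary: K q rule: less_induct)
    case less
    note K = \<open>polytope K\<close> and p = \<open>p extreme_point_of K\<close>
    show ?case
    proof (cases "collinear K")
      case True
      then show ?thesis
        using collinear_polytope_improving_edge[OF K True p less.prems(3,4)] by blast
    next
      case False
      then have "aff_dim K \<ge> 2"
        by (simp add: collinear_aff_dim)
      then obtain F q' where F: "F face_of K" "F \<noteq> K" "p \<in> F" "q' \<in> F" "m \<bullet> q' > m \<bullet> p"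
        using polytope_proper_face_improving[OF K p less.prems(3,4)] by blast
      have "aff_dim F < aff_dim K"
        using F(1,2) K face_of_aff_dim_lt polytope_imp_convex by blast
      moreover have "aff_dim F \<ge> 0"
        using F(3) aff_dim_negative_iff[of F] by (metis empty_iff not_less)
      ultimately have "nat (aff_dim F) < nat (aff_dim K)"
        by simp
      moreover have "polytope F"
        using F(1) K face_of_polytope_polytope by blast
      moreover have "p extreme_point_of F"
        using F(1,3) p extreme_point_of_face by blast
      ultimately obtain r where "closed_segment p r face_of F" "m \<bullet> r > m \<bullet> p"
        using less.hyps F(4,5) by blast
      then show ?thesis
        using F(1) face_of_trans by blast
    qed
  qed
  then show thesis
    using that by blast
qed

section \<open>Polytopes with axis-parallel edges\<close>

lemma axis_parallel_polytope_maximizer_coordinatewise: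
  fixes V :: "(real ^ 'n) set"
  assumes V: "polytope V"
    and axis: "\<And>p r. closed_segment p r face_of V \<Longrightarrow> card {i. p $ i \<noteq> r $ i} \<le> 1"
    and p: "p extreme_point_of V" "p \<in> maximizers V s" and "y \<in> V"
  shows "s $ i * y $ i \<le> s $ i * p $ i"
proof (rule ccontr)
  assume improvable: "\<not> ?thesis"
  define m where "m = s $ i *\<^sub>R axis i (1::real)"
  have m_inner: "m \<bullet> x = s $ i * x $ i" for x
    by (simp add: m_def inner_axis' mult.commute)
  have "m \<bullet> y > m \<bullet> p"
    using improvable m_inner by simp
  then obtain r where r: "closed_segment p r face_of V" "m \<bullet> r > m \<bullet> p"
    using polytope_improving_edge[OF V p(1) \<open>y \<in> V\<close>] by blast
  have "p $ i \<noteq> r $ i"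
    using r(2) m_inner by auto
  have "r $ k = p $ k" if "k \<noteq> i" for k
  proof (rule ccontr)
    assume "r $ k \<noteq> p $ k"
    then have "k \<in> {k. p $ k \<noteq> r $ k}" "i \<in> {k. p $ k \<noteq> r $ k}"
      using \<open>p $ i \<noteq> r $ i\<close> by auto
    then have "k = i"
      using axis[OF r(1)] card_le_Suc0_iff_eq[of "{k. p $ k \<noteq> r $ k}"] by auto
    with that show False ..
  qed
  then have "r - p = (r $ i - p $ i) *\<^sub>R axis i 1"
    by (auto simp: vec_eq_iff axis_def)
  then have "s \<bullet> r - s \<bullet> p = (r $ i - p $ i) * s $ i"
    by (metis inner_diff_right inner_axis inner_scaleR_right inner_real_def mult.right_neutral)
  also have "\<dots> = m \<bullet> r - m \<bullet> p"
    by (simp add: m_inner algebra_simps)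
  moreover have "s \<bullet> r \<le> s \<bullet> p"
    using p(2) r(1) face_of_imp_subset unfolding maximizers_def by blast
  ultimately show False
    using r(2) by simp
qed

lemma axis_parallel_polytope_corner:
  fixes V :: "(real ^ 'n) set"
  assumes V: "polytope V"
    and axis: "\<And>p r. closed_segment p r face_of V \<Longrightarrow> card {i. p $ i \<noteq> r $ i} \<le> 1"
    and box: "V \<subseteq> cbox lo hi"
    and lo: "\<And>i. \<exists>y \<in> V. y $ i = lo $ i" and hi: "\<And>i. \<exists>y \<in> V. y $ i = hi $ i"
  shows "(\<chi> i. if up i then hi $ i else lo $ i) \<in> V"
proof -
  define c :: "real ^ 'n" where "c = (\<chi> i. if up i then hi $ i else lo $ i)"
  define s :: "real ^ 'n" where "s = (\<chi> i. if up i then 1 else - 1)"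
  have "V \<noteq> {}"
    using lo by blast
  then obtain p where p: "p extreme_point_of V" "p \<in> maximizers V s"
    using polytope_extreme_point_maximizer[OF V] by blast
  then have "p \<in> V"
    unfolding maximizers_def by blast
  have "p $ i = c $ i" for i
  proof -
    obtain y where "y \<in> V" "y $ i = c $ i"
      using lo hi unfolding c_def by (cases "up i") auto
    then have "s $ i * c $ i \<le> s $ i * p $ i"
      using axis_parallel_polytope_maximizer_coordinatewise[OF V axis p] by metis
    moreover have "lo $ i \<le> p $ i" "p $ i \<le> hi $ i"
      using box \<open>p \<in> V\<close> by (auto simp: mem_box_cart)
    ultimately show ?thesis
      unfolding s_def c_def by (cases "up i") auto
  qed
  then show ?thesis
    using \<open>p \<in> V\<close> unfolding c_def[symmetric] by (metis vec_eq_iff)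
qed

lemma cbox_corner_minimizes_inner:
  fixes a x lo hi :: "real ^ 'n"
  assumes "x \<in> cbox lo hi"
  shows "a \<bullet> (\<chi> i. if a $ i \<le> 0 then hi $ i else lo $ i) \<le> a \<bullet> x"
  unfolding inner_vec_def
proof (rule sum_mono)
  fix i
  have "lo $ i \<le> x $ i" "x $ i \<le> hi $ i"
    using assms by (auto simp: mem_box_cart)
  then show "a $ i \<bullet> (\<chi> i. if a $ i \<le> 0 then hi $ i else lo $ i) $ i \<le> a $ i \<bullet> x $ i"
    by (auto simp: mult_left_mono mult_left_mono_neg)
qed

lemma axis_parallel_polytope_eq_cbox:
  fixes V :: "(real ^ 'n) set"
  assumes V: "polytope V"
    and axis: "\<And>p r. closed_segment p r face_of V \<Longrightarrow> card {i. p $ i \<noteq> r $ i} \<le> 1"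
    and box: "V \<subseteq> cbox lo hi"
    and lo: "\<And>i. \<exists>y \<in> V. y $ i = lo $ i" and hi: "\<And>i. \<exists>y \<in> V. y $ i = hi $ i"
  shows "V = cbox lo hi"
proof
  show "cbox lo hi \<subseteq> V"
  proof
    fix x assume x: "x \<in> cbox lo hi"
    show "x \<in> V"
    proof (rule ccontr)
      assume "x \<notin> V"
      then obtain a b where "a \<bullet> x < b" "\<forall>y \<in> V. b < a \<bullet> y"
        using separating_hyperplane_closed_point polytope_imp_convex[OF V]
          compact_imp_closed[OF polytope_imp_compact[OF V]] by metis
      moreover have "(\<chi> i. if a $ i \<le> 0 then hi $ i else lo $ i) \<in> V"
        by (rule axis_parallel_polytope_corner[OF V axis box lo hi])
      ultimately show False
        using cbox_corner_minimizes_inner[OF x, of a] by fastforce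
    qed
  qed
qed (fact box)

lemma maximizers_cbox_segment_axis_parallel:
  fixes lo hi l v w :: "real ^ 'n"
  assumes max: "maximizers (cbox lo hi) l = closed_segment v w"
  shows "card {i. v $ i \<noteq> w $ i} \<le> 1"
proof -
  have "i = j" if i: "v $ i \<noteq> w $ i" and j: "v $ j \<noteq> w $ j" for i j
  proof (rule ccontr)
    assume "i \<noteq> j"
    have vw: "v \<in> maximizers (cbox lo hi) l" "w \<in> maximizers (cbox lo hi) l"
      using max by auto
    then have "v \<in> cbox lo hi" "w \<in> cbox lo hi" "l \<bullet> v = l \<bullet> w"
      unfolding maximizers_def by (auto intro: antisym)
    \<comment> \<open>Exchanging the i-th coordinates of v and w stays in the box and preserves l \<bullet> v + l \<bullet> w.\<close>
    define v' where "v' = (\<chi> k. if k = i then w $ k else v $ k)"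
    define w' where "w' = (\<chi> k. if k = i then v $ k else w $ k)"
    have "v' \<in> cbox lo hi" "w' \<in> cbox lo hi"
      using \<open>v \<in> cbox lo hi\<close> \<open>w \<in> cbox lo hi\<close> by (auto simp: mem_box_cart v'_def w'_def)
    moreover have "l \<bullet> v' + l \<bullet> w' = l \<bullet> v + l \<bullet> w"
      unfolding inner_vec_def sum.distrib[symmetric] by (rule sum.cong) (auto simp: v'_def w'_def)
    ultimately have "v' \<in> maximizers (cbox lo hi) l"
      using vw \<open>l \<bullet> v = l \<bullet> w\<close> unfolding maximizers_def by fastforce
    then obtain t where t: "v' = (1 - t) *\<^sub>R v + t *\<^sub>R w"
      using max unfolding closed_segment_def by blast
    have "v $ j = (1 - t) * v $ j + t * w $ j"
      using arg_cong[OF t, of "\<lambda>x. x $ j"] \<open>i \<noteq> j\<close> by (simp add: v'_def)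
    then have "t = 0"
      using j by (simp add: algebra_simps)
    moreover have "w $ i = (1 - t) * v $ i + t * w $ i"
      using arg_cong[OF t, of "\<lambda>x. x $ i"] by (simp add: v'_def)
    ultimately show False
      using i by simp
  qed
  then show ?thesis
    by (simp add: card_le_Suc0_iff_eq)
qed

lemma polytope_edge_axis_parallel:
  fixes V :: "(real ^ 'n) set"
  assumes V: "polytope V" and dim: "CARD('n) \<ge> 2"
    and exposed: "\<And>l v w. l \<noteq> 0 \<Longrightarrow> maximizers V l = closed_segment v w \<Longrightarrow>
      card {i. v $ i \<noteq> w $ i} \<le> 1"
    and edge: "closed_segment p r face_of V"
  shows "card {i. p $ i \<noteq> r $ i} \<le> 1"
proof -
  have "aff_dim (closed_segment p r) < DIM(real ^ 'n)"
    using dim collinear_aff_dim[of "closed_segment p r"] by simp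
  then obtain l where "l \<noteq> 0" "maximizers V l = closed_segment p r"
    using polyhedron_face_eq_maximizers[OF polytope_imp_polyhedron[OF V] edge] by blast
  then show ?thesis
    by (rule exposed)
qed

lemma polytope_ne_cbox_iff_diagonal_exposed_edge:
  fixes V :: "(real ^ 'n) set"
  assumes dim: "CARD('n) \<ge> 2" and V: "polytope V" and box: "V \<subseteq> cbox lo hi"
    and lo: "\<And>i. \<exists>y \<in> V. y $ i = lo $ i" and hi: "\<And>i. \<exists>y \<in> V. y $ i = hi $ i"
  shows "V \<noteq> cbox lo hi \<longleftrightarrow>
    (\<exists>v \<in> V. \<exists>w \<in> V. v \<noteq> w \<and> (\<exists>l. l \<noteq> 0 \<and> maximizers V l = closed_segment w v) \<and>
      card {i. v $ i \<noteq> w $ i} \<ge> 2)"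
proof
  assume "V \<noteq> cbox lo hi"
  then obtain p r where "closed_segment p r face_of V" "\<not> card {i. p $ i \<noteq> r $ i} \<le> 1"
    using axis_parallel_polytope_eq_cbox[OF V _ box lo hi] by blast
  then obtain l v w where l: "l \<noteq> 0" "maximizers V l = closed_segment w v"
    and diagonal: "\<not> card {i. w $ i \<noteq> v $ i} \<le> 1"
    using polytope_edge_axis_parallel[OF V dim] by blast
  have "{i. w $ i \<noteq> v $ i} = {i. v $ i \<noteq> w $ i}"
    by auto
  then have "card {i. v $ i \<noteq> w $ i} \<ge> 2"
    using diagonal by simp
  moreover have "v \<noteq> w"
    using diagonal by auto
  moreover have "v \<in> V" "w \<in> V"
    using l(2) unfolding maximizers_def by auto
  ultimately show "\<exists>v \<in> V. \<exists>w \<in> V. v \<noteq> w \<and>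
      (\<exists>l. l \<noteq> 0 \<and> maximizers V l = closed_segment w v) \<and> card {i. v $ i \<noteq> w $ i} \<ge> 2"
    using l by blast
next
  assume "\<exists>v \<in> V. \<exists>w \<in> V. v \<noteq> w \<and>
    (\<exists>l. l \<noteq> 0 \<and> maximizers V l = closed_segment w v) \<and> card {i. v $ i \<noteq> w $ i} \<ge> 2"
  then obtain v w l where "maximizers V l = closed_segment w v" "card {i. v $ i \<noteq> w $ i} \<ge> 2"
    by blast
  moreover have "{i. w $ i \<noteq> v $ i} = {i. v $ i \<noteq> w $ i}"
    by auto
  ultimately show "V \<noteq> cbox lo hi"
    using maximizers_cbox_segment_axis_parallel[of lo hi l w v] by auto
qed

section \<open>Feasible payoffs of a finite game\<close>

lemma Collect_convex_combination_eq_closed_segment: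
  "{t *\<^sub>R v + (1 - t) *\<^sub>R w | t. t \<in> {0..1}} = closed_segment w v"
  unfolding closed_segment_def by (auto simp: add.commute)

lemma finite_profiles: "(\<And>i. finite (A i)) \<Longrightarrow> finite (profiles (A :: 'n::finite \<Rightarrow> 'b set))"
  unfolding profiles_def by (simp add: finite_PiE)

lemma profiles_nonempty: "(\<And>i. A i \<noteq> {}) \<Longrightarrow> profiles A \<noteq> {}"
  unfolding profiles_def by (simp add: PiE_eq_empty_iff)

lemma Fstar_eq_cbox:
  "Fstar A u = cbox (\<chi> i. Min (u i ` profiles A)) (\<chi> i. Max (u i ` profiles A))"
  unfolding Fstar_def by (auto simp: mem_box_cart)

lemma polytope_feasible_set: "finite (profiles A) \<Longrightarrow> polytope (feasible_set A u)"
  unfolding feasible_set_def polytope_def by blast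

lemma feasible_set_subset_Fstar:
  assumes "finite (profiles A)"
  shows "feasible_set A u \<subseteq> Fstar A u"
  unfolding feasible_set_def Fstar_eq_cbox
proof (rule hull_minimal)
  show "payoff_vec u ` profiles A \<subseteq> cbox (\<chi> i. Min (u i ` profiles A)) (\<chi> i. Max (u i ` profiles A))"
    using assms by (auto simp: mem_box_cart payoff_vec_def)
qed (rule convex_box)

lemma payoff_value_in_feasible_set:
  assumes "x \<in> u i ` profiles A"
  shows "\<exists>y \<in> feasible_set A u. y $ i = x"
proof -
  obtain a where "a \<in> profiles A" "x = u i a"
    using assms by blast
  then show ?thesis
    unfolding feasible_set_def by (intro bexI[of _ "payoff_vec u a"]) (auto simp: payoff_vec_def hull_inc)
qed

lemma feasible_set_ne_Fstar_iff:
  fixes A :: "'n::finite \<Rightarrow> 'b set" and u :: "'n \<Rightarrow> ('n \<Rightarrow> 'b) \<Rightarrow> real"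
  assumes "CARD('n) \<ge> 2" "finite (profiles A)" "profiles A \<noteq> {}"
  defines "V \<equiv> feasible_set A u"
  shows "V \<noteq> Fstar A u \<longleftrightarrow>
    (\<exists>v \<in> V. \<exists>w \<in> V. v \<noteq> w \<and> (\<exists>l. l \<noteq> 0 \<and> maximizers V l = closed_segment w v) \<and>
      card {i. v $ i \<noteq> w $ i} \<ge> 2)"
proof -
  define lo :: "real ^ 'n" where "lo = (\<chi> i. Min (u i ` profiles A))"
  define hi :: "real ^ 'n" where "hi = (\<chi> i. Max (u i ` profiles A))"
  have F: "Fstar A u = cbox lo hi"
    unfolding lo_def hi_def by (rule Fstar_eq_cbox)
  have "polytope V"
    unfolding V_def using assms(2) by (rule polytope_feasible_set)
  moreover have "V \<subseteq> cbox lo hi"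
    unfolding V_def F[symmetric] using assms(2) by (rule feasible_set_subset_Fstar)
  moreover have "\<exists>y \<in> V. y $ i = lo $ i" "\<exists>y \<in> V. y $ i = hi $ i" for i
    unfolding V_def lo_def hi_def using assms(2,3)
    by (auto intro!: payoff_value_in_feasible_set Min_in Max_in)
  ultimately show ?thesis
    unfolding F by (intro polytope_ne_cbox_iff_diagonal_exposed_edge[OF assms(1)])
qed

theorem lemma3:
  fixes A :: "'n::finite \<Rightarrow> 'b set"
    and u :: "'n \<Rightarrow> ('n \<Rightarrow> 'b) \<Rightarrow> real"
  assumes "CARD('n) \<ge> 2"
    and "\<And>i. finite (A i)"
    and "\<And>i. A i \<noteq> {}"
  shows "feasible_set A u \<noteq> Fstar A u \<longleftrightarrow>
    (\<exists>v \<in> feasible_set A u. \<exists>w \<in> feasible_set A u. v \<noteq> w \<and>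
       (\<exists>l :: real ^ 'n. l \<noteq> 0 \<and>
          (\<forall>z :: real ^ 'n.
             (z \<in> feasible_set A u \<and> (\<forall>y \<in> feasible_set A u. l \<bullet> y \<le> l \<bullet> z))
             \<longleftrightarrow> z \<in> {t *\<^sub>R v + (1 - t) *\<^sub>R w | t. t \<in> {0..1}})) \<and>
       card {i. v $ i \<noteq> w $ i} \<ge> 2)"
proof -
  have argmax_eq: "(\<forall>z. (z \<in> V \<and> (\<forall>y \<in> V. l \<bullet> y \<le> l \<bullet> z)) \<longleftrightarrow>
      z \<in> {t *\<^sub>R v + (1 - t) *\<^sub>R w | t. t \<in> {0..1}}) \<longleftrightarrow> maximizers V l = closed_segment w v"
    for V and l v w :: "real ^ 'n"
    unfolding Collect_convex_combination_eq_closed_segment by (simp add: set_eq_iff maximizers_def)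
  have "finite (profiles A)"
    using assms(2) by (rule finite_profiles)
  moreover have "profiles A \<noteq> {}"
    using assms(3) by (rule profiles_nonempty)
  ultimately show ?thesis
    unfolding argmax_eq by (rule feasible_set_ne_Fstar_iff[OF assms(1)])
qed

end
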